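(* Let $n,T,K$ be positive integers, let $P_1,\ldots,P_T$ be $n\times n$ matrices and let $\hat P_1,\ldots,\hat P_T$ be (possibly random) $n\times n$ estimates of them. Define the $T\times T$ matrices $D_{ij}=\|P_i-P_j\|_F$ and $\hat D_{ij}=\|\hat P_i-\hat P_j\|_F$. Suppose $D$ has rank $K$; let $V$ (resp. $\hat V$) be a $T\times K$ matrix whose columns are orthonormal eigenvectors of $D$ (resp. $\hat D$) corresponding to its $K$ eigenvalues of largest absolute value, and let $\gamma$ be the smallest absolute value among the $K$ nonzero eigenvalues of $D$. Assume that for some absolute constants $\alpha,\beta>0$ and constants $C_1,\ldots,C_T$, for each $i=1,\ldots,T$, \[ \frac{\|\hat P_i-P_i\|_F^2}{n^2}\le C_i\, n^{-\alpha}(\log n)^{\beta}, \] either in expectation or with probability at least $1-\epsilon_{i,n}$. Let $C_T=\max_{1\le i\le T}C_i$. Then, in expectation (in the first case) or with probability at least $1-\sum_{i=1}^T\epsilon_{i,n}$ (in the second case), there is a $K\times K$ orthogonal matrix $\hat O$ with \[ \|\hat V\hat O-V\|_F^2\le \frac{64\,C_T\,T^2\,n^{2-\alpha}(\log n)^{\beta}}{\gamma^2}. \]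
   Context: $\|\cdot\|_F$ denotes the Frobenius norm. In the intended application, $P_i$ is the link probability matrix of the $i$-th observed network on a common node set of size $n$ and $\hat P_i$ is a graphon-based estimate of it computed from the observed adjacency matrix. *)

theory Defs
  imports "HOL-Analysis.Analysis" "HOL-Probability.Probability"
begin

definition frob_norm :: "real^'n^'m \<Rightarrow> real" where
  "frob_norm A = sqrt (\<Sum>i\<in>UNIV. \<Sum>j\<in>UNIV. (A $ i $ j)^2)"

definition dist_matrix :: "('t \<Rightarrow> real^'n^'n) \<Rightarrow> real^'t^'t" where
  "dist_matrix P = (\<chi> i j. frob_norm (P i - P j))"

definition is_eigenvalue :: "real^'t^'t \<Rightarrow> real \<Rightarrow> bool" where
  "is_eigenvalue A \<mu> \<longleftrightarrow> (\<exists>x. x \<noteq> 0 \<and> A *v x = \<mu> *\<^sub>R x)"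

text \<open>V (a T x K matrix) has orthonormal columns which are eigenvectors of A for
  the K eigenvalues of A of largest absolute value (counted with multiplicity):
  the columns are orthonormal eigenvectors with eigenvalues lam k, and every
  eigenvalue of A on the orthogonal complement of the column space has absolute
  value at most each |lam k|.\<close>
definition top_abs_eigvecs :: "real^'t^'t \<Rightarrow> real^'k^'t \<Rightarrow> bool" where
  "top_abs_eigvecs A V \<longleftrightarrow>
     transpose V ** V = mat 1 \<and>
     (\<exists>lam :: real^'k.
        (\<forall>k. A *v column k V = lam $ k *\<^sub>R column k V) \<and>
        (\<forall>x \<mu>. x \<noteq> 0 \<and> A *v x = \<mu> *\<^sub>R x \<and> (\<forall>k. column k V \<bullet> x = 0)
               \<longrightarrow> (\<forall>k. \<bar>\<mu>\<bar> \<le> \<bar>lam $ k\<bar>)))"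

definition min_nonzero_abs_eig :: "real^'t^'t \<Rightarrow> real" where
  "min_nonzero_abs_eig A = Min {\<bar>\<mu>\<bar> | \<mu>. \<mu> \<noteq> 0 \<and> is_eigenvalue A \<mu>}"

end

theory Submission
  imports Defs
begin

text \<open>Write \<open>D\<close>, \<open>D'\<close> for the distance matrices of the \<open>P\<^sub>i\<close> and of their estimates. By the
  triangle inequality \<open>|D'\<^sub>i\<^sub>j - D\<^sub>i\<^sub>j| \<le> \<parallel>P'\<^sub>i - P\<^sub>i\<parallel> + \<parallel>P'\<^sub>j - P\<^sub>j\<parallel>\<close>, so
  \<open>\<parallel>D' - D\<parallel>\<^sup>2 \<le> 4 T \<Sum>\<^sub>i \<parallel>P'\<^sub>i - P\<^sub>i\<parallel>\<^sup>2\<close>. Since \<open>D\<close> has rank \<open>K\<close>, it vanishes on the orthogonal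
  complement of its leading eigenvectors \<open>V\<close>, and a sin-theta argument in the style of Davis and Kahan
  gives \<open>\<gamma>\<^sup>2 (K - \<parallel>V'\<^sup>T V\<parallel>\<^sup>2) \<le> 4 \<parallel>D' - D\<parallel>\<^sup>2\<close>. The orthogonal Procrustes problem, solved by a
  singular value decomposition of \<open>V'\<^sup>T V\<close>, provides an orthogonal \<open>O\<close> with
  \<open>\<parallel>V' O - V\<parallel>\<^sup>2 \<le> 2 (K - \<parallel>V'\<^sup>T V\<parallel>\<^sup>2)\<close>. Altogether
  \<open>\<parallel>V' O - V\<parallel>\<^sup>2 \<le> 32 T \<Sum>\<^sub>i \<parallel>P'\<^sub>i - P\<^sub>i\<parallel>\<^sup>2 / \<gamma>\<^sup>2\<close>, and the hypotheses bound the sum by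
  \<open>T C\<^sub>T n\<^sup>2\<^sup>-\<^sup>\<alpha> (log n)\<^sup>\<beta>\<close>, in expectation or on the intersection of the good events (union bound).
  The spectral theorem needed along the way is proved by maximising the Rayleigh quotient.\<close>

section \<open>Frobenius geometry of real matrices\<close>

declare transpose_matrix_vector [simp del] \<comment> \<open>keep \<open>transpose W *v y\<close> instead of \<open>y v* W\<close>\<close>

lemma frob_norm_eq_norm: "frob_norm (X::real^'k^'t) = norm X"
  by (simp add: frob_norm_def norm_eq_sqrt_inner inner_vec_def power2_eq_square)

lemma norm_matrix_sq_entries: "norm (X::real^'k^'t) ^ 2 = (\<Sum>i\<in>UNIV. \<Sum>j\<in>UNIV. (X $ i $ j) ^ 2)"
  unfolding power2_norm_eq_inner by (simp add: inner_vec_def power2_eq_square)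

lemma matrix_vector_mult_columns: "(A::real^'k^'t) *v x = (\<Sum>k\<in>UNIV. x $ k *\<^sub>R column k A)"
  by (simp add: vec_eq_iff matrix_vector_mult_def column_def sum_component mult.commute)

lemma transpose_matrix_vector_nth: "(transpose A *v x) $ k = column k (A::real^'k^'t) \<bullet> x"
  by (simp add: matrix_vector_mult_def transpose_def column_def inner_vec_def mult.commute)

lemma transpose_matrix_vector_eq_0_iff:
  "transpose A *v x = 0 \<longleftrightarrow> (\<forall>k. column k (A::real^'k^'t) \<bullet> x = 0)"
  by (simp add: vec_eq_iff transpose_matrix_vector_nth)

lemma matrix_vector_inner_transpose: "((A::real^'n^'m) *v x) \<bullet> y = x \<bullet> (transpose A *v y)"
  by (metis dot_lmul_matrix inner_commute transpose_matrix_vector)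

lemma symmetric_matrix_vector_inner:
  "transpose A = A \<Longrightarrow> ((A::real^'n^'n) *v x) \<bullet> y = x \<bullet> (A *v y)"
  by (metis matrix_vector_inner_transpose)

lemma column_matrix_mult: "column k (A ** B) = A *v column k (B::real^'k^'n)"
  by (simp add: column_def matrix_matrix_mult_def matrix_vector_mult_def vec_eq_iff)

lemma isometry_columns_inner:
  "transpose V ** V = mat 1 \<Longrightarrow> column k (V::real^'k^'t) \<bullet> column l V = (if k = l then 1 else 0)"
proof -
  assume "transpose V ** V = mat 1"
  then have "(transpose V ** V) $ k $ l = (mat 1 :: real^'k^'k) $ k $ l" by simp
  then show ?thesis by (simp add: matrix_mult_transpose_dot_column mat_def)
qed

lemma inner_matrix_columns: "(A::real^'k^'t) \<bullet> B = (\<Sum>k\<in>UNIV. column k A \<bullet> column k B)"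
proof -
  have "A \<bullet> B = (\<Sum>i\<in>UNIV. \<Sum>k\<in>UNIV. A $ i $ k * B $ i $ k)" by (simp add: inner_vec_def)
  also have "\<dots> = (\<Sum>k\<in>UNIV. \<Sum>i\<in>UNIV. A $ i $ k * B $ i $ k)" by (rule sum.swap)
  finally show ?thesis by (simp add: inner_vec_def column_def)
qed

lemma norm_matrix_sq_columns: "norm (A::real^'k^'t) ^ 2 = (\<Sum>k\<in>UNIV. norm (column k A) ^ 2)"
  by (simp add: power2_norm_eq_inner inner_matrix_columns)

lemma inner_transpose: "transpose (A::real^'k^'t) \<bullet> transpose B = A \<bullet> B"
  unfolding inner_matrix_columns by (simp add: inner_vec_def transpose_def column_def) (rule sum.swap)

lemma norm_transpose: "norm (transpose (A::real^'k^'t)) = norm A"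
  by (simp add: norm_eq_sqrt_inner inner_transpose)

lemma inner_matrix_mult_left: "((A::real^'n^'m) ** B) \<bullet> C = B \<bullet> (transpose A ** C)"
  by (simp add: inner_matrix_columns column_matrix_mult matrix_vector_inner_transpose)

lemma isometry_inner:
  "transpose W ** W = mat 1 \<Longrightarrow> ((W::real^'n^'m) *v x) \<bullet> (W *v y) = x \<bullet> y"
  by (simp add: matrix_vector_inner_transpose matrix_vector_mul_assoc)

lemma isometry_mult_inner:
  "transpose W ** W = mat 1 \<Longrightarrow> ((W::real^'n^'m) ** A) \<bullet> (W ** B) = A \<bullet> B"
  by (simp add: inner_matrix_mult_left matrix_mul_assoc)

lemma norm_isometry_sq:
  assumes "transpose W ** W = mat 1"
  shows "norm (W::real^'k^'t) ^ 2 = real CARD('k)"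
proof -
  have "norm W ^ 2 = (W ** mat 1) \<bullet> (W ** mat 1)" by (simp add: power2_norm_eq_inner)
  also have "\<dots> = (mat 1 :: real^'k^'k) \<bullet> mat 1" using assms by (rule isometry_mult_inner)
  also have "\<dots> = real CARD('k)" by (simp add: inner_vec_def mat_def if_distrib cong: if_cong)
  finally show ?thesis .
qed

lemma transpose_isometry_residual:
  assumes "transpose W ** W = mat 1"
  shows "transpose W *v (y - W *v (transpose W *v y)) = (0::real^'k)"
proof -
  have "transpose W *v (W *v (transpose W *v y)) = transpose W *v y"
    using assms by (simp add: matrix_vector_mul_assoc matrix_mul_assoc)
  then show ?thesis by (simp add: matrix_vector_mult_diff_distrib)
qed

lemma norm_sq_isometry_residual:
  assumes "transpose W ** W = mat 1"
  shows "norm (y - W *v (transpose W *v y)) ^ 2 = norm y ^ 2 - norm (transpose (W::real^'k^'t) *v y) ^ 2"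
proof -
  define z where "z = transpose W *v y"
  have "(W *v z) \<bullet> (y - W *v z) = 0"
    using transpose_isometry_residual[OF assms, of y] by (simp add: matrix_vector_inner_transpose z_def)
  moreover have "(W *v z) \<bullet> y = z \<bullet> z"
    by (simp add: matrix_vector_inner_transpose z_def)
  ultimately have "(W *v z) \<bullet> (W *v z) = z \<bullet> z"
    by (simp add: inner_diff_right)
  moreover have "(y - W *v z) \<bullet> (y - W *v z) = y \<bullet> y - 2 * ((W *v z) \<bullet> y) + (W *v z) \<bullet> (W *v z)"
    by (simp add: inner_diff_left inner_diff_right inner_commute)
  ultimately have "norm (y - W *v z) ^ 2 = norm y ^ 2 - norm z ^ 2"
    using \<open>(W *v z) \<bullet> y = z \<bullet> z\<close> by (simp add: power2_norm_eq_inner)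
  then show ?thesis by (simp add: z_def)
qed

lemma norm_transpose_isometry_le:
  "transpose W ** W = mat 1 \<Longrightarrow> norm (transpose (W::real^'k^'t) *v y) \<le> norm y"
proof -
  assume "transpose W ** W = mat 1"
  from norm_sq_isometry_residual[OF this, of y]
  have "norm (transpose W *v y) ^ 2 \<le> norm y ^ 2"
    using zero_le_power2[of "norm (y - W *v (transpose W *v y))"] by linarith
  then show ?thesis by (rule power2_le_imp_le) simp
qed

lemma norm_transpose_isometry_mult_le:
  assumes "transpose W ** W = mat 1"
  shows "norm (transpose W ** (A::real^'l^'t)) \<le> norm A"
proof -
  have "norm (transpose W ** A) ^ 2 \<le> norm A ^ 2"
    unfolding norm_matrix_sq_columns column_matrix_mult
    by (intro sum_mono power_mono norm_transpose_isometry_le[OF assms]) simp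
  then show ?thesis by (rule power2_le_imp_le) simp
qed

lemma norm_mult_isometry_le:
  assumes "transpose W ** W = mat 1"
  shows "norm ((A::real^'t^'l) ** W) \<le> norm A"
proof -
  have "norm (A ** W) = norm (transpose W ** transpose A)"
    by (metis norm_transpose matrix_transpose_mul)
  also have "\<dots> \<le> norm (transpose A)" using assms by (rule norm_transpose_isometry_mult_le)
  finally show ?thesis by (simp add: norm_transpose)
qed

section \<open>Spectral theorem for symmetric matrices\<close>

lemma eq_0_if_quadratic_nonpos:
  fixes b c :: real
  assumes "\<And>t. 2 * t * b + t^2 * c \<le> 0"
  shows "b = 0"
proof (rule ccontr)
  assume "b \<noteq> 0"
  define s where "s = \<bar>c\<bar> + 1"
  have s: "s \<ge> 1" "\<bar>c\<bar> \<le> s" by (auto simp: s_def)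
  have "- c \<le> s" using s(2) by linarith
  from mult_left_mono[OF this zero_le_power2[of "b/s"]] have "(b/s)^2 * c \<ge> - ((b/s)^2 * s)"
    by simp
  moreover have "(b/s)^2 * s = b^2 / s" using s by (simp add: power2_eq_square)
  moreover have "2 * (b/s) * b = 2 * (b^2 / s)" by (simp add: power2_eq_square)
  moreover have "b^2 / s > 0" using \<open>b \<noteq> 0\<close> s by simp
  ultimately have "2 * (b/s) * b + (b/s)^2 * c > 0" by linarith
  with assms show False by (meson not_le)
qed

text \<open>Perturbing the maximiser \<open>x\<close> by \<open>t y\<close> with \<open>y \<bottom> x\<close> changes the Rayleigh quotient by
  \<open>2 t (y \<bullet> A x) + O(t\<^sup>2)\<close>, so the linear term vanishes and \<open>A x\<close> is parallel to \<open>x\<close>.\<close>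
lemma rayleigh_maximizer_eigenvector:
  fixes A :: "real^'n^'n"
  assumes sym: "transpose A = A" and S: "subspace S" and inv: "\<And>y. y \<in> S \<Longrightarrow> A *v y \<in> S"
    and x: "x \<in> S" "norm x = 1"
    and max: "\<And>y. y \<in> S \<Longrightarrow> norm y = 1 \<Longrightarrow> y \<bullet> (A *v y) \<le> x \<bullet> (A *v x)"
  shows "A *v x = (x \<bullet> (A *v x)) *\<^sub>R x"
proof -
  define m where "m = x \<bullet> (A *v x)"
  have xx: "x \<bullet> x = 1" using x by (simp add: norm_eq_1)
  have quad: "u \<bullet> (A *v u) \<le> m * (u \<bullet> u)" if "u \<in> S" for u
  proof (cases "u = 0")
    case False
    have "(u /\<^sub>R norm u) \<bullet> (A *v (u /\<^sub>R norm u)) \<le> m"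
      using max[of "u /\<^sub>R norm u"] that False S by (simp add: m_def subspace_scale)
    then show ?thesis using False
      by (simp add: matrix_vector_mult_scaleR divide_simps power2_norm_eq_inner[symmetric] power2_eq_square)
  qed simp
  have orth: "y \<bullet> (A *v x) = 0" if y: "y \<in> S" "y \<bullet> x = 0" for y
  proof (rule eq_0_if_quadratic_nonpos)
    fix t :: real
    have "x + t *\<^sub>R y \<in> S" using x(1) y(1) S by (simp add: subspace_add subspace_scale)
    have "x \<bullet> (A *v y) = y \<bullet> (A *v x)"
      using symmetric_matrix_vector_inner[OF sym, of x y] by (simp add: inner_commute)
    then have "(x + t *\<^sub>R y) \<bullet> (A *v (x + t *\<^sub>R y)) = m + 2 * t * (y \<bullet> (A *v x)) + t^2 * (y \<bullet> (A *v y))"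
      by (simp add: matrix_vector_right_distrib matrix_vector_mult_scaleR inner_add_left
          inner_add_right m_def power2_eq_square algebra_simps)
    moreover have "(x + t *\<^sub>R y) \<bullet> (x + t *\<^sub>R y) = 1 + t^2 * (y \<bullet> y)"
      using xx y(2) by (simp add: inner_add_left inner_add_right inner_commute[of x y] power2_eq_square)
    ultimately show "2 * t * (y \<bullet> (A *v x)) + t^2 * (y \<bullet> (A *v y) - m * (y \<bullet> y)) \<le> 0"
      using quad[OF \<open>x + t *\<^sub>R y \<in> S\<close>] by (simp add: algebra_simps)
  qed
  define r where "r = A *v x - m *\<^sub>R x"
  have "r \<in> S" unfolding r_def using inv x(1) S by (simp add: subspace_diff subspace_scale)
  moreover have "r \<bullet> x = 0"
    unfolding inner_commute[of r x] by (simp add: r_def inner_diff_right m_def xx)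
  ultimately have "r \<bullet> r = 0"
    using orth[of r] by (simp add: r_def inner_diff_right inner_commute[of r x])
  then show ?thesis by (simp add: r_def m_def)
qed

lemma symmetric_eigenvector_in_invariant_subspace:
  fixes A :: "real^'n^'n"
  assumes "transpose A = A" "subspace S" "\<And>y. y \<in> S \<Longrightarrow> A *v y \<in> S" "S \<noteq> {0}"
  obtains x where "x \<in> S" "norm x = 1" "A *v x = (x \<bullet> (A *v x)) *\<^sub>R x"
proof -
  let ?K = "S \<inter> sphere 0 1"
  have "compact ?K"
    using compact_Int_closed[OF compact_sphere closed_subspace[OF assms(2)]] by (simp add: Int_commute)
  moreover obtain z where "z \<in> S" "z \<noteq> 0" using assms(2,4) subspace_0 by blast
  then have "z /\<^sub>R norm z \<in> ?K" using assms(2) by (simp add: subspace_scale)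
  then have "?K \<noteq> {}" by blast
  moreover have "continuous_on ?K (\<lambda>x. x \<bullet> (A *v x))"
    by (intro continuous_on_inner continuous_on_id matrix_vector_mult_linear_continuous_on)
  ultimately obtain x where "x \<in> ?K" "\<forall>y\<in>?K. y \<bullet> (A *v y) \<le> x \<bullet> (A *v x)"
    using continuous_attains_sup by blast
  with rayleigh_maximizer_eigenvector[OF assms(1-3)] show thesis by (intro that) auto
qed

lemma symmetric_invariant_orthogonal_complement:
  fixes A :: "real^'n^'n"
  assumes "transpose A = A" "A *v x = m *\<^sub>R x" "x \<bullet> y = 0"
  shows "x \<bullet> (A *v y) = 0"
  using assms symmetric_matrix_vector_inner[of A x y] by simp

lemma orthogonal_slice_of_subspace:
  fixes x :: "'a::euclidean_space"
  assumes S: "subspace S" and x: "x \<in> S" "norm x = 1"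
  shows "subspace (S \<inter> {y. x \<bullet> y = 0})" "dim (S \<inter> {y. x \<bullet> y = 0}) < dim S"
    "S \<subseteq> span (insert x (S \<inter> {y. x \<bullet> y = 0}))"
proof -
  let ?S' = "S \<inter> {y. x \<bullet> y = 0}"
  show S': "subspace ?S'"
    using S subspace_orthogonal_to_vector[of x] by (simp add: orthogonal_def subspace_inter)
  have "x \<notin> ?S'" using x(2) by (simp add: norm_eq_1)
  then have "?S' \<subset> S" using x(1) by blast
  then show "dim ?S' < dim S" using S' S by (intro dim_psubset) (metis span_eq_iff)
  show "S \<subseteq> span (insert x ?S')"
  proof
    fix z assume "z \<in> S"
    have "x \<bullet> (z - (z \<bullet> x) *\<^sub>R x) = 0"
      using x(2) by (simp add: inner_diff_right norm_eq_1 inner_commute[of x z])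
    then have "z - (z \<bullet> x) *\<^sub>R x \<in> span (insert x ?S')"
      using \<open>z \<in> S\<close> x(1) S by (intro span_base) (simp add: subspace_diff subspace_scale)
    moreover have "(z \<bullet> x) *\<^sub>R x \<in> span (insert x ?S')" by (simp add: span_base span_scale)
    ultimately have "(z - (z \<bullet> x) *\<^sub>R x) + (z \<bullet> x) *\<^sub>R x \<in> span (insert x ?S')" by (rule span_add)
    then show "z \<in> span (insert x ?S')" by simp
  qed
qed

lemma symmetric_invariant_subspace_eigenbasis:
  fixes A :: "real^'n^'n"
  assumes sym: "transpose A = A"
  shows "subspace S \<Longrightarrow> (\<And>y. y \<in> S \<Longrightarrow> A *v y \<in> S) \<Longrightarrow>
    \<exists>B. B \<subseteq> S \<and> finite B \<and> pairwise orthogonal B \<and> S \<subseteq> span B \<and>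
        (\<forall>b\<in>B. norm b = 1 \<and> A *v b = (b \<bullet> (A *v b)) *\<^sub>R b)"
proof (induction "dim S" arbitrary: S rule: less_induct)
  case less
  show ?case
  proof (cases "S = {0}")
    case True
    then show ?thesis by (intro exI[of _ "{}"]) auto
  next
    case False
    obtain x where x: "x \<in> S" "norm x = 1" "A *v x = (x \<bullet> (A *v x)) *\<^sub>R x"
      using symmetric_eigenvector_in_invariant_subspace[OF sym less.prems False] by blast
    define S' where "S' = S \<inter> {y. x \<bullet> y = 0}"
    note slice = orthogonal_slice_of_subspace[OF less.prems(1) x(1,2), folded S'_def]
    have "A *v y \<in> S'" if "y \<in> S'" for y
    proof -
      have "y \<in> S" "x \<bullet> y = 0" using that by (auto simp: S'_def)
      then show ?thesis
        using less.prems(2) symmetric_invariant_orthogonal_complement[OF sym x(3)] by (simp add: S'_def)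
    qed
    from less.hyps[OF slice(2,1) this] obtain B where B: "B \<subseteq> S'" "finite B" "pairwise orthogonal B"
      "S' \<subseteq> span B" "\<forall>b\<in>B. norm b = 1 \<and> A *v b = (b \<bullet> (A *v b)) *\<^sub>R b"
      by blast
    have "insert x S' \<subseteq> span (insert x B)"
      using B(4) span_mono[of B "insert x B"] by (auto intro: span_base)
    then have "S \<subseteq> span (insert x B)"
      using slice(3) span_minimal[OF _ subspace_span] by blast
    moreover have "pairwise orthogonal (insert x B)"
    proof -
      have "orthogonal x b" "orthogonal b x" if "b \<in> B" for b
        using that B(1) by (auto simp: S'_def orthogonal_def inner_commute[of b x])
      then show ?thesis using B(3) by (simp add: pairwise_insert)
    qed
    moreover have "insert x B \<subseteq> S" using x(1) B(1) by (auto simp: S'_def)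
    ultimately show ?thesis using B(2,5) x(2,3) by (intro exI[of _ "insert x B"]) simp
  qed
qed

lemma orthogonal_matrix_of_orthonormal_columns:
  fixes h :: "'k::finite \<Rightarrow> real^'k"
  assumes "\<And>i. norm (h i) = 1" "\<And>i j. i \<noteq> j \<Longrightarrow> orthogonal (h i) (h j)"
  shows "orthogonal_matrix (\<chi> a b. h b $ a)"
  using assms by (simp add: orthogonal_matrix_orthonormal_columns column_def)

lemma orthonormal_family_completion:
  fixes g :: "'k::finite \<Rightarrow> real^'k"
  assumes unit: "\<And>i. i \<in> I \<Longrightarrow> norm (g i) = 1"
    and orth: "\<And>i j. i \<in> I \<Longrightarrow> j \<in> I \<Longrightarrow> i \<noteq> j \<Longrightarrow> g i \<bullet> g j = 0"
  obtains h where "\<And>i. norm (h i) = 1" "\<And>i j. i \<noteq> j \<Longrightarrow> orthogonal (h i) (h j)"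
    "\<And>i. i \<in> I \<Longrightarrow> h i = g i"
proof -
  define R where "R = {y. \<forall>x\<in>span (g ` I). orthogonal x y}"
  have "inj_on g I"
  proof (rule inj_onI)
    fix i j assume "i \<in> I" "j \<in> I" "g i = g j"
    then have "g i \<bullet> g j = 1" using unit[of i] by (simp add: norm_eq_1)
    then show "i = j" using orth \<open>i \<in> I\<close> \<open>j \<in> I\<close> by force
  qed
  moreover have "independent (g ` I)"
  proof (rule pairwise_orthogonal_independent)
    show "pairwise orthogonal (g ` I)" using orth by (auto simp: pairwise_def orthogonal_def)
    show "0 \<notin> g ` I" using unit by force
  qed
  ultimately have "dim (span (g ` I)) = card I"
    by (simp add: dim_eq_card_independent card_image)
  moreover have "dim R + dim (span (g ` I)) = CARD('k)"
    using dim_subspace_orthogonal_to_vectors[of "span (g ` I)" UNIV] by (simp add: R_def)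
  ultimately have dimR: "dim R = card (- I)" by (simp add: Compl_eq_Diff_UNIV card_Diff_subset)
  have "subspace R" unfolding R_def by (rule subspace_orthogonal_to_vectors)
  then obtain B where B: "B \<subseteq> R" "pairwise orthogonal B" "\<And>x. x \<in> B \<Longrightarrow> norm x = 1"
      "independent B" "card B = dim R" "span B = R"
    using orthonormal_basis_subspace[OF \<open>subspace R\<close>] by blast
  have "finite B" using B(4) independent_imp_finite by blast
  then obtain \<phi> where \<phi>: "bij_betw \<phi> (- I) B"
    using finite_same_card_bij[of "- I" B] B(5) dimR by auto
  define h where "h i = (if i \<in> I then g i else \<phi> i)" for i
  have \<phi>B: "i \<notin> I \<Longrightarrow> \<phi> i \<in> B" for i using \<phi> bij_betwE by blast
  have gR: "i \<in> I \<Longrightarrow> y \<in> R \<Longrightarrow> g i \<bullet> y = 0" for i y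
    by (auto simp: R_def orthogonal_def span_base)
  have "orthogonal (h i) (h j)" if "i \<noteq> j" for i j
  proof (cases "i \<in> I"; cases "j \<in> I")
    assume "i \<notin> I" "j \<notin> I"
    then have "\<phi> i \<noteq> \<phi> j" using \<phi> that by (auto simp: bij_betw_def inj_on_def)
    then show ?thesis using \<open>i \<notin> I\<close> \<open>j \<notin> I\<close> \<phi>B B(2) by (simp add: h_def pairwise_def)
  next
    assume "i \<in> I" "j \<notin> I"
    then show ?thesis using gR \<phi>B B(1) by (auto simp: h_def orthogonal_def)
  next
    assume "i \<notin> I" "j \<in> I"
    then show ?thesis using gR \<phi>B B(1) by (auto simp: h_def orthogonal_def inner_commute[of "\<phi> i"])
  qed (use that orth in \<open>simp add: h_def orthogonal_def\<close>)
  moreover have "norm (h i) = 1" for i using unit B(3) \<phi>B by (simp add: h_def)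
  ultimately show thesis by (intro that[of h]) (auto simp: h_def)
qed

lemma symmetric_eigenbasis_matrix:
  fixes A :: "real^'n^'n"
  assumes "transpose A = A"
  obtains F \<mu> where "orthogonal_matrix F" "\<And>i. A *v column i F = \<mu> i *\<^sub>R column i F"
proof -
  obtain B where B: "finite B" "pairwise orthogonal B" "UNIV \<subseteq> span B"
      "\<forall>b\<in>B. norm b = 1 \<and> A *v b = (b \<bullet> (A *v b)) *\<^sub>R b"
    using symmetric_invariant_subspace_eigenbasis[OF assms, of UNIV] by auto
  have "independent B" using B(2,4) pairwise_orthogonal_independent by force
  moreover have "span B = UNIV" using B(3) by auto
  ultimately have "card B = dim (UNIV :: (real^'n) set)" by (metis dim_span_eq_card_independent)
  then have "card B = CARD('n)" by simp
  then obtain f :: "'n \<Rightarrow> real^'n" where f: "bij_betw f UNIV B"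
    using finite_same_card_bij[OF finite B(1), of "UNIV :: 'n set"] by auto
  then have fB: "f i \<in> B" for i using bij_betwE by blast
  have "orthogonal (f i) (f j)" if "i \<noteq> j" for i j
  proof -
    have "f i \<noteq> f j" using that f by (auto simp: bij_betw_def inj_on_def)
    then show ?thesis using B(2) fB by (simp add: pairwise_def)
  qed
  then have "orthogonal_matrix (\<chi> a b. f b $ a)"
    using fB B(4) by (intro orthogonal_matrix_of_orthonormal_columns) auto
  then show thesis
    using fB B(4) by (intro that[of "\<chi> a b. f b $ a" "\<lambda>i. f i \<bullet> (A *v f i)"]) (auto simp: column_def)
qed

section \<open>Singular values and the Procrustes bound\<close>

lemma norm_mult_orthogonal_matrix:
  assumes "orthogonal_matrix F"
  shows "norm ((A::real^'k^'t) ** F) = norm A"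
proof (rule antisym)
  have F: "transpose F ** F = mat 1" "transpose (transpose F) ** transpose F = mat 1"
    using assms by (simp_all add: orthogonal_matrix_def)
  show "norm (A ** F) \<le> norm A" using F(1) by (rule norm_mult_isometry_le)
  have "norm A = norm ((A ** F) ** transpose F)" using F(2) by (simp flip: matrix_mul_assoc)
  also have "\<dots> \<le> norm (A ** F)" using F(2) by (rule norm_mult_isometry_le)
  finally show "norm A \<le> norm (A ** F)" .
qed

lemma singular_value_decomposition:
  fixes N :: "real^'k::finite^'k"
  obtains F G :: "real^'k^'k" and \<sigma> :: "'k \<Rightarrow> real"
  where "orthogonal_matrix F" "orthogonal_matrix G" "\<And>i. \<sigma> i = norm (N *v column i F)"
    "\<And>i. N *v column i F = \<sigma> i *\<^sub>R column i G"
proof -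
  have sym: "transpose (transpose N ** N) = transpose N ** N" by (simp add: matrix_transpose_mul)
  obtain F s where F: "orthogonal_matrix F"
    and eig: "\<And>i. (transpose N ** N) *v column i F = s i *\<^sub>R column i F"
    using symmetric_eigenbasis_matrix[OF sym] by blast
  define \<sigma> where "\<sigma> i = norm (N *v column i F)" for i
  define I where "I = {i. \<sigma> i \<noteq> 0}"
  define g where "g i = (N *v column i F) /\<^sub>R \<sigma> i" for i
  have orthN: "(N *v column i F) \<bullet> (N *v column j F) = 0" if "i \<noteq> j" for i j
  proof -
    have "column i F \<bullet> column j F = 0"
      using F that by (simp add: orthogonal_matrix_orthonormal_columns orthogonal_def)
    then show ?thesis
      by (simp add: matrix_vector_inner_transpose matrix_vector_mul_assoc eig[of j])
  qed
  have unit: "norm (g i) = 1" if "i \<in> I" for i using that by (simp add: g_def I_def \<sigma>_def)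
  have orth: "g i \<bullet> g j = 0" if "i \<in> I" "j \<in> I" "i \<noteq> j" for i j
    using orthN[OF that(3)] by (simp add: g_def)
  obtain h where h: "\<And>i. norm (h i) = 1" "\<And>i j. i \<noteq> j \<Longrightarrow> orthogonal (h i) (h j)"
    "\<And>i. i \<in> I \<Longrightarrow> h i = g i"
    using orthonormal_family_completion[of I g, OF unit orth] by blast
  define G where "G = (\<chi> a b. h b $ a)"
  have G: "orthogonal_matrix G" "\<And>i. i \<in> I \<Longrightarrow> column i G = g i"
    using orthogonal_matrix_of_orthonormal_columns[OF h(1,2)] h(3) by (simp_all add: G_def column_def)
  have svd: "N *v column i F = \<sigma> i *\<^sub>R column i G" for i
  proof (cases "i \<in> I")
    case True
    then show ?thesis by (simp add: G(2) g_def I_def)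
  next
    case False
    then show ?thesis by (simp add: I_def \<sigma>_def)
  qed
  show thesis by (rule that[of F G \<sigma>, OF F G(1) _ svd]) (simp add: \<sigma>_def)
qed

lemma norm_isometry_mult_diff_sq:
  fixes W V :: "real^'k::finite^'t"
  assumes W: "transpose W ** W = mat 1" and V: "transpose V ** V = mat 1" and Q: "orthogonal_matrix Q"
  shows "norm (W ** Q - V) ^ 2 = 2 * real CARD('k) - 2 * (Q \<bullet> (transpose W ** V))"
proof -
  have "norm (W ** Q) ^ 2 = norm Q ^ 2"
    using W by (simp add: power2_norm_eq_inner isometry_mult_inner)
  also have "\<dots> = real CARD('k)" using Q by (simp add: orthogonal_matrix norm_isometry_sq)
  finally have "norm (W ** Q) ^ 2 = real CARD('k)" .
  moreover have "norm V ^ 2 = real CARD('k)" using V by (rule norm_isometry_sq)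
  moreover have "(W ** Q) \<bullet> V = Q \<bullet> (transpose W ** V)" by (simp add: inner_matrix_mult_left)
  ultimately show ?thesis using dot_norm_neg[of "W ** Q" V] by simp
qed

text \<open>With \<open>W\<^sup>T V F = G \<Sigma>\<close> a singular value decomposition, \<open>Q = G F\<^sup>T\<close> gives
  \<open>\<parallel>W Q - V\<parallel>\<^sup>2 = 2 (K - \<Sum> \<sigma>\<^sub>i)\<close>, and \<open>\<sigma>\<^sub>i \<le> 1\<close> yields \<open>\<Sum> \<sigma>\<^sub>i \<ge> \<Sum> \<sigma>\<^sub>i\<^sup>2 = \<parallel>W\<^sup>T V\<parallel>\<^sup>2\<close>.\<close>
lemma procrustes_bound:
  fixes W V :: "real^'k::finite^'t"
  assumes W: "transpose W ** W = mat 1" and V: "transpose V ** V = mat 1"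
  obtains Q where "orthogonal_matrix Q"
    "norm (W ** Q - V) ^ 2 \<le> 2 * (real CARD('k) - norm (transpose W ** V) ^ 2)"
proof -
  define N where "N = transpose W ** V"
  obtain F G :: "real^'k^'k" and \<sigma> where F: "orthogonal_matrix F" and G: "orthogonal_matrix G"
    and \<sigma>: "\<And>i. \<sigma> i = norm (N *v column i F)" and svd: "\<And>i. N *v column i F = \<sigma> i *\<^sub>R column i G"
    using singular_value_decomposition[of N] by blast
  have unitF: "norm (column i F) = 1" and unitG: "norm (column i G) = 1" for i
    using F G by (simp_all add: orthogonal_matrix_orthonormal_columns)
  have \<sigma>_le_1: "\<sigma> i \<le> 1" for i
  proof -
    have "\<sigma> i = norm (transpose W *v (V *v column i F))" by (simp add: \<sigma> N_def matrix_vector_mul_assoc)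
    also have "\<dots> \<le> norm (V *v column i F)" using W by (rule norm_transpose_isometry_le)
    also have "\<dots> = 1" using isometry_inner[OF V] unitF by (simp add: norm_eq_sqrt_inner)
    finally show ?thesis .
  qed
  define Q where "Q = G ** transpose F"
  have Q: "orthogonal_matrix Q" unfolding Q_def using G F by (simp add: orthogonal_matrix_mul)
  have colNF: "column i (N ** F) = \<sigma> i *\<^sub>R column i G" for i by (simp add: column_matrix_mult svd)
  have "Q \<bullet> N = (F ** transpose G) \<bullet> transpose N"
    using inner_transpose[of Q N] by (simp add: Q_def matrix_transpose_mul)
  also have "\<dots> = transpose G \<bullet> transpose (N ** F)"
    by (simp add: inner_matrix_mult_left matrix_transpose_mul)
  also have "\<dots> = G \<bullet> (N ** F)" by (rule inner_transpose)
  also have "\<dots> = (\<Sum>i\<in>UNIV. \<sigma> i)" by (simp add: inner_matrix_columns colNF unitG[unfolded norm_eq_1])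
  finally have QN: "Q \<bullet> N = (\<Sum>i\<in>UNIV. \<sigma> i)" .
  have "norm N ^ 2 = norm (N ** F) ^ 2" using F by (simp add: norm_mult_orthogonal_matrix)
  also have "\<dots> = (\<Sum>i\<in>UNIV. \<sigma> i ^ 2)"
    unfolding norm_matrix_sq_columns colNF by (simp add: unitG power2_eq_square)
  also have "\<dots> \<le> (\<Sum>i\<in>UNIV. \<sigma> i)"
    by (intro sum_mono) (simp add: power2_eq_square \<sigma> mult_left_le \<sigma>_le_1[unfolded \<sigma>])
  finally have "norm N ^ 2 \<le> Q \<bullet> N" by (simp add: QN)
  then show thesis
    using Q norm_isometry_mult_diff_sq[OF W V Q] by (intro that[of Q]) (simp_all add: N_def)
qed

section \<open>Eigenvalues, rank and leading eigenvectors\<close>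

lemma symmetric_eigenvalues_finite:
  fixes D :: "real^'t^'t"
  assumes sym: "transpose D = D"
  shows "finite {\<mu>. is_eigenvalue D \<mu>}"
proof -
  obtain F ev where F: "orthogonal_matrix F" and eig: "\<And>i. D *v column i F = ev i *\<^sub>R column i F"
    using symmetric_eigenbasis_matrix[OF sym] by blast
  have "{\<mu>. is_eigenvalue D \<mu>} \<subseteq> range ev"
  proof
    fix \<mu> assume "\<mu> \<in> {\<mu>. is_eigenvalue D \<mu>}"
    then obtain x where x: "x \<noteq> 0" "D *v x = \<mu> *\<^sub>R x" unfolding is_eigenvalue_def by blast
    have "F *v (transpose F *v x) = x"
      using F by (simp add: orthogonal_matrix_def matrix_vector_mul_assoc)
    then have "transpose F *v x \<noteq> 0" using x(1) by auto
    then obtain i where i: "column i F \<bullet> x \<noteq> 0" by (auto simp: transpose_matrix_vector_eq_0_iff)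
    have "\<mu> * (column i F \<bullet> x) = column i F \<bullet> (D *v x)" using x(2) by simp
    also have "\<dots> = (D *v column i F) \<bullet> x" using sym by (simp add: symmetric_matrix_vector_inner)
    also have "\<dots> = ev i * (column i F \<bullet> x)" by (simp add: eig)
    finally show "\<mu> \<in> range ev" using i by simp
  qed
  then show ?thesis by (rule finite_subset) simp
qed

lemma min_nonzero_abs_eig_le:
  fixes D :: "real^'t^'t"
  assumes "transpose D = D" "D *v x = \<mu> *\<^sub>R x" "x \<noteq> 0" "\<mu> \<noteq> 0"
  shows "0 < min_nonzero_abs_eig D" "min_nonzero_abs_eig D \<le> \<bar>\<mu>\<bar>"
proof -
  define E where "E = {\<bar>\<mu>\<bar> | \<mu>. \<mu> \<noteq> 0 \<and> is_eigenvalue D \<mu>}"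
  have "E \<subseteq> abs ` {\<mu>. is_eigenvalue D \<mu>}" by (auto simp: E_def)
  then have "finite E" using symmetric_eigenvalues_finite[OF assms(1)] finite_surj by blast
  moreover have "\<bar>\<mu>\<bar> \<in> E" using assms by (auto simp: E_def is_eigenvalue_def)
  ultimately have "Min E \<in> E" "Min E \<le> \<bar>\<mu>\<bar>" by (auto intro: Min_in)
  then show "0 < min_nonzero_abs_eig D" "min_nonzero_abs_eig D \<le> \<bar>\<mu>\<bar>"
    by (auto simp: min_nonzero_abs_eig_def E_def)
qed

lemma card_le_rank_if_nonzero_eigenvectors:
  fixes D :: "real^'t^'t"
  assumes "pairwise orthogonal S" "0 \<notin> S" "\<And>x. x \<in> S \<Longrightarrow> \<exists>\<mu>. \<mu> \<noteq> 0 \<and> D *v x = \<mu> *\<^sub>R x"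
  shows "card S \<le> rank D"
proof -
  have "S \<subseteq> range (\<lambda>x. D *v x)"
  proof
    fix x assume "x \<in> S"
    then obtain \<mu> where "\<mu> \<noteq> 0" "D *v x = \<mu> *\<^sub>R x" using assms(3) by blast
    then have "D *v (x /\<^sub>R \<mu>) = x" by (simp add: matrix_vector_mult_scaleR)
    then show "x \<in> range (\<lambda>x. D *v x)" by (metis rangeI)
  qed
  moreover have "independent S" using assms(1,2) by (rule pairwise_orthogonal_independent)
  ultimately show ?thesis by (simp add: rank_dim_range independent_card_le_dim)
qed

lemma kernel_transpose_subspace: "subspace {x. transpose (V::real^'k^'t) *v x = 0}"
  by (auto simp: subspace_def matrix_vector_right_distrib matrix_vector_mult_scaleR)

lemma symmetric_kernel_transpose_invariant:
  fixes D :: "real^'t^'t" and V :: "real^'k^'t"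
  assumes "transpose D = D" "\<And>k. D *v column k V = \<mu> k *\<^sub>R column k V" "transpose V *v x = 0"
  shows "transpose V *v (D *v x) = 0"
proof -
  have "column k V \<bullet> (D *v x) = \<mu> k * (column k V \<bullet> x)" for k
    using assms(1,2) symmetric_matrix_vector_inner[of D "column k V" x] by simp
  then show ?thesis using assms(3) by (simp add: transpose_matrix_vector_eq_0_iff)
qed

text \<open>All eigenvalues on the columns of \<open>V\<close> dominate \<open>\<nu>\<close>, so if \<open>\<nu> \<noteq> 0\<close> they are nonzero too, and
  together with \<open>b\<close> the columns give \<open>K + 1\<close> orthogonal vectors in the range of \<open>D\<close>.\<close>
lemma top_abs_eigvecs_orthogonal_eigenvalue_eq_0:
  fixes D :: "real^'t^'t" and V :: "real^'k^'t"
  assumes rank: "rank D \<le> CARD('k)" and top: "top_abs_eigvecs D V"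
    and b: "b \<noteq> 0" "D *v b = \<nu> *\<^sub>R b" "transpose V *v b = 0"
  shows "\<nu> = 0"
proof (rule ccontr)
  assume "\<nu> \<noteq> 0"
  obtain lam :: "real^'k" where V: "transpose V ** V = mat 1"
    and eig: "\<And>k. D *v column k V = lam $ k *\<^sub>R column k V"
    and dom: "\<And>y \<nu> k. y \<noteq> 0 \<Longrightarrow> D *v y = \<nu> *\<^sub>R y \<Longrightarrow> transpose V *v y = 0 \<Longrightarrow> \<bar>\<nu>\<bar> \<le> \<bar>lam $ k\<bar>"
    using top unfolding top_abs_eigvecs_def transpose_matrix_vector_eq_0_iff by metis
  have lam: "lam $ k \<noteq> 0" for k using dom[OF b, of k] \<open>\<nu> \<noteq> 0\<close> by auto
  let ?S = "insert b (range (\<lambda>k. column k V))"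
  have cols: "column k V \<bullet> column l V = (if k = l then 1 else 0)" for k l
    using V by (rule isometry_columns_inner)
  have bcol: "column k V \<bullet> b = 0" for k using b(3) by (simp add: transpose_matrix_vector_eq_0_iff)
  have "inj (\<lambda>k. column k V)"
  proof (rule injI)
    fix k l assume "column k V = column l V"
    then show "k = l" using cols[of k l] cols[of k k] by (auto split: if_splits)
  qed
  moreover have "b \<noteq> column k V" for k using bcol[of k] cols[of k k] by auto
  then have "b \<notin> range (\<lambda>k. column k V)" by auto
  ultimately have "card ?S = CARD('k) + 1" by (simp add: card_image)
  moreover have "card ?S \<le> rank D"
  proof (rule card_le_rank_if_nonzero_eigenvectors)
    have "orthogonal (column k V) b" "orthogonal b (column k V)" for k
      using bcol[of k] by (simp_all add: orthogonal_def inner_commute)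
    moreover have "pairwise orthogonal (range (\<lambda>k. column k V))"
      using cols by (auto simp: pairwise_def orthogonal_def)
    ultimately show "pairwise orthogonal ?S" by (auto simp: pairwise_insert)
    have "column k V \<noteq> 0" for k using cols[of k k] by auto
    then show "0 \<notin> ?S" using b(1) by auto
    show "\<exists>\<mu>. \<mu> \<noteq> 0 \<and> D *v y = \<mu> *\<^sub>R y" if "y \<in> ?S" for y
      using that b(2) \<open>\<nu> \<noteq> 0\<close> eig lam by auto
  qed
  ultimately show False using rank by simp
qed

lemma top_abs_eigvecs_kernel:
  fixes D :: "real^'t^'t" and V :: "real^'k^'t"
  assumes sym: "transpose D = D" and rank: "rank D \<le> CARD('k)" and top: "top_abs_eigvecs D V"
    and x: "transpose V *v x = 0"
  shows "D *v x = 0"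
proof -
  obtain lam :: "real^'k" where eig: "\<And>k. D *v column k V = lam $ k *\<^sub>R column k V"
    using top unfolding top_abs_eigvecs_def by blast
  let ?C = "{y. transpose V *v y = 0}"
  have "D *v y \<in> ?C" if "y \<in> ?C" for y
    using symmetric_kernel_transpose_invariant[OF sym eig] that by simp
  from symmetric_invariant_subspace_eigenbasis[OF sym kernel_transpose_subspace this]
  obtain B where B: "B \<subseteq> ?C" "finite B" "pairwise orthogonal B" "?C \<subseteq> span B"
      "\<forall>b\<in>B. norm b = 1 \<and> D *v b = (b \<bullet> (D *v b)) *\<^sub>R b"
    by blast
  have "D *v b = 0" if "b \<in> B" for b
  proof -
    have "b \<noteq> 0" "transpose V *v b = 0" using B(1,5) that by auto
    with B(5) that top_abs_eigvecs_orthogonal_eigenvalue_eq_0[OF rank top] show ?thesis by force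
  qed
  moreover have "x \<in> span B" using B(4) x by blast
  ultimately show ?thesis by (rule linear_eq_0_on_span[OF matrix_vector_mul_linear])
qed

lemma rank_le_card_nonzero_eigenvalues:
  fixes D :: "real^'t^'t" and V :: "real^'k^'t"
  assumes V: "transpose V ** V = mat 1" and eig: "\<And>k. D *v column k V = \<mu> k *\<^sub>R column k V"
    and kernel: "\<And>x. transpose V *v x = 0 \<Longrightarrow> D *v x = 0"
  shows "rank D \<le> card {k. \<mu> k \<noteq> 0}"
proof -
  let ?K = "{k. \<mu> k \<noteq> 0}"
  have "D *v x \<in> span ((\<lambda>k. column k V) ` ?K)" for x
  proof -
    define z where "z = transpose V *v x"
    have "D *v x = D *v (V *v z)"
      using kernel[OF transpose_isometry_residual[OF V, of x]]
      by (simp add: z_def matrix_vector_mult_diff_distrib)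
    also have "\<dots> = (\<Sum>k\<in>UNIV. (z $ k * \<mu> k) *\<^sub>R column k V)"
      by (simp add: matrix_vector_mult_columns[of V] linear_sum[OF matrix_vector_mul_linear]
          matrix_vector_mult_scaleR eig)
    also have "\<dots> = (\<Sum>k\<in>?K. (z $ k * \<mu> k) *\<^sub>R column k V)"
      by (rule sum.mono_neutral_right) auto
    also have "\<dots> \<in> span ((\<lambda>k. column k V) ` ?K)"
      by (intro span_sum span_scale span_base) auto
    finally show ?thesis .
  qed
  then have "range (\<lambda>x. D *v x) \<subseteq> span ((\<lambda>k. column k V) ` ?K)" by blast
  then have "dim (range (\<lambda>x. D *v x)) \<le> card ((\<lambda>k. column k V) ` ?K)" by (simp add: dim_le_card)
  also have "\<dots> \<le> card ?K" by (rule card_image_le) simp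
  finally show ?thesis by (simp add: rank_dim_range)
qed

lemma top_abs_eigvecs_full_rank:
  fixes D :: "real^'t^'t" and V :: "real^'k^'t"
  assumes sym: "transpose D = D" and rank: "rank D = CARD('k)" and top: "top_abs_eigvecs D V"
  obtains \<mu> where "\<And>k. D *v column k V = \<mu> k *\<^sub>R column k V" "\<And>k. \<mu> k \<noteq> 0"
    "\<And>x. transpose V *v x = 0 \<Longrightarrow> D *v x = 0"
proof -
  obtain lam :: "real^'k" where V: "transpose V ** V = mat 1"
    and eig: "\<And>k. D *v column k V = lam $ k *\<^sub>R column k V"
    using top unfolding top_abs_eigvecs_def by blast
  have kernel: "\<And>x. transpose V *v x = 0 \<Longrightarrow> D *v x = 0"
    using top_abs_eigvecs_kernel[OF sym _ top] rank by simp
  have "CARD('k) \<le> card {k. lam $ k \<noteq> 0}"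
    using rank_le_card_nonzero_eigenvalues[OF V eig kernel] rank by simp
  then have "{k. lam $ k \<noteq> 0} = UNIV" by (metis card_seteq finite top_greatest)
  then show thesis using eig kernel by (intro that[of "\<lambda>k. lam $ k"]) auto
qed

section \<open>A sin-theta bound\<close>

lemma bessel_inequality:
  fixes B :: "'a::real_inner set"
  assumes "finite B" "pairwise orthogonal B" "\<And>b. b \<in> B \<Longrightarrow> norm b = 1"
  shows "(\<Sum>b\<in>B. (y \<bullet> b) ^ 2) \<le> y \<bullet> y"
proof -
  define p where "p = (\<Sum>b\<in>B. (y \<bullet> b) *\<^sub>R b)"
  have pb: "p \<bullet> b = y \<bullet> b" if "b \<in> B" for b
  proof -
    have "p \<bullet> b = (\<Sum>c\<in>B. (y \<bullet> c) * (c \<bullet> b))" by (simp add: p_def inner_sum_left)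
    also have "\<dots> = (\<Sum>c\<in>B. if c = b then y \<bullet> b else 0)"
      using assms(2,3) that by (intro sum.cong) (auto simp: pairwise_def orthogonal_def norm_eq_1)
    finally show ?thesis using assms(1) that by simp
  qed
  have yp: "y \<bullet> p = (\<Sum>b\<in>B. (y \<bullet> b) ^ 2)" by (simp add: p_def inner_sum_right power2_eq_square)
  have "p \<bullet> p = (\<Sum>b\<in>B. (y \<bullet> b) * (p \<bullet> b))"
    by (subst (2) p_def) (simp add: inner_sum_right)
  also have "\<dots> = (\<Sum>b\<in>B. (y \<bullet> b) ^ 2)" by (simp add: pb power2_eq_square)
  finally have "p \<bullet> p = (\<Sum>b\<in>B. (y \<bullet> b) ^ 2)" .
  moreover have "0 \<le> (y - p) \<bullet> (y - p)" by simp
  moreover have "(y - p) \<bullet> (y - p) = y \<bullet> y - 2 * (y \<bullet> p) + p \<bullet> p"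
    by (simp add: inner_diff_left inner_diff_right inner_commute)
  ultimately show ?thesis using yp by simp
qed

lemma parseval_identity:
  fixes B :: "'a::euclidean_space set"
  assumes "finite B" "pairwise orthogonal B" "\<And>b. b \<in> B \<Longrightarrow> norm b = 1" "x \<in> span B"
  shows "x \<bullet> x = (\<Sum>b\<in>B. (x \<bullet> b) ^ 2)"
proof -
  have "x \<bullet> x = x \<bullet> (\<Sum>b\<in>B. (x \<bullet> b) *\<^sub>R b)"
    using orthonormal_basis_expand[OF assms(2,3,4,1)] by simp
  also have "\<dots> = (\<Sum>b\<in>B. (x \<bullet> b) ^ 2)" by (simp add: inner_sum_right power2_eq_square)
  finally show ?thesis .
qed

lemma card_minus_norm_transpose_mult_sq:
  fixes V :: "real^'j^'t" and W :: "real^'k^'t"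
  assumes V: "transpose V ** V = mat 1" and W: "transpose W ** W = mat 1"
  shows "real CARD('k) - norm (transpose V ** W) ^ 2
    = (\<Sum>l\<in>UNIV. norm (column l W - V *v (transpose V *v column l W)) ^ 2)"
proof -
  have "real CARD('k) = (\<Sum>l\<in>UNIV. norm (column l W) ^ 2)"
    using norm_isometry_sq[OF W] by (simp add: norm_matrix_sq_columns)
  then show ?thesis
    by (simp add: norm_sq_isometry_residual[OF V] norm_matrix_sq_columns column_matrix_mult sum_subtractf)
qed

text \<open>With \<open>q\<close> the component of \<open>w\<close> orthogonal to the columns of \<open>V\<close>, \<open>D q = 0\<close> and hence
  \<open>\<mu> \<parallel>q\<parallel>\<^sup>2 = q \<bullet> D' w = q \<bullet> (D' - D) w\<close>.\<close>
lemma residual_large_eigenvalue_bound: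
  fixes D D' :: "real^'t^'t" and V :: "real^'k^'t"
  assumes sym: "transpose D = D" and V: "transpose V ** V = mat 1"
    and kernel: "\<And>x. transpose V *v x = 0 \<Longrightarrow> D *v x = 0" and eig: "D' *v w = \<mu> *\<^sub>R w"
  shows "\<bar>\<mu>\<bar> * norm (w - V *v (transpose V *v w)) \<le> norm ((D' - D) *v w)"
proof -
  define q where "q = w - V *v (transpose V *v w)"
  have Vq: "transpose V *v q = 0" unfolding q_def using V by (rule transpose_isometry_residual)
  have "(V *v (transpose V *v w)) \<bullet> q = 0" by (simp add: matrix_vector_inner_transpose Vq)
  then have "q \<bullet> w = q \<bullet> q" by (simp add: q_def inner_diff_left inner_diff_right inner_commute)
  have "q \<bullet> (D *v w) = 0" using symmetric_matrix_vector_inner[OF sym, of q w] kernel[OF Vq] by simp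
  then have "\<mu> * (q \<bullet> q) = q \<bullet> ((D' - D) *v w)"
    using \<open>q \<bullet> w = q \<bullet> q\<close> eig by (simp add: matrix_vector_mult_diff_rdistrib inner_diff_right)
  then have "\<bar>\<mu> * (q \<bullet> q)\<bar> \<le> norm q * norm ((D' - D) *v w)"
    using Cauchy_Schwarz_ineq2[of q "(D' - D) *v w"] by simp
  then have "\<bar>\<mu>\<bar> * norm q * norm q \<le> norm q * norm ((D' - D) *v w)"
    by (simp add: abs_mult dot_square_norm power2_eq_square mult.assoc)
  then show ?thesis unfolding q_def[symmetric] by (cases "q = 0") (simp_all add: mult.commute)
qed

lemma eigenvector_inner_perturbation:
  fixes D D' :: "real^'t^'t"
  assumes "transpose D' = D'" "D *v v = \<mu> *\<^sub>R v" "D' *v b = \<nu> *\<^sub>R b"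
  shows "(\<nu> - \<mu>) * (v \<bullet> b) = ((D' - D) *v v) \<bullet> b"
  using assms symmetric_matrix_vector_inner[of D' v b]
  by (simp add: matrix_vector_mult_diff_rdistrib inner_diff_left algebra_simps)

lemma square_le_four_times_square:
  fixes a b :: real
  assumes "0 \<le> a" "a \<le> 2 * b"
  shows "a ^ 2 \<le> 4 * b ^ 2"
  using power_mono[OF assms(2,1), of 2] by (simp add: power_mult_distrib)

text \<open>Expanding the residual of \<open>v\<close> in an eigenbasis of \<open>D'\<close> on the orthogonal complement of
  the columns of \<open>W\<close>: each coefficient is controlled by the eigenvalue gap of at least \<open>\<gamma>/2\<close>.\<close>
lemma residual_small_eigenvalues_bound:
  fixes D D' :: "real^'t^'t" and W :: "real^'k^'t"
  assumes sym': "transpose D' = D'" and W: "transpose W ** W = mat 1"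
    and eig': "\<And>l. D' *v column l W = \<mu>' l *\<^sub>R column l W"
    and small: "\<And>x \<nu>. x \<noteq> 0 \<Longrightarrow> D' *v x = \<nu> *\<^sub>R x \<Longrightarrow> transpose W *v x = 0 \<Longrightarrow> 2 * \<bar>\<nu>\<bar> \<le> \<gamma>"
    and eig: "D *v v = \<mu> *\<^sub>R v" and gap: "\<gamma> \<le> \<bar>\<mu>\<bar>" and "0 \<le> \<gamma>"
  shows "\<gamma>^2 * norm (v - W *v (transpose W *v v))^2 \<le> 4 * norm ((D' - D) *v v)^2"
proof -
  define r where "r = v - W *v (transpose W *v v)"
  let ?C = "{y. transpose W *v y = 0}"
  have "D' *v y \<in> ?C" if "y \<in> ?C" for y
    using that symmetric_kernel_transpose_invariant[OF sym' eig'] by simp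
  from symmetric_invariant_subspace_eigenbasis[OF sym' kernel_transpose_subspace this]
  obtain B where B: "B \<subseteq> ?C" "finite B" "pairwise orthogonal B" "?C \<subseteq> span B"
      "\<forall>b\<in>B. norm b = 1 \<and> D' *v b = (b \<bullet> (D' *v b)) *\<^sub>R b"
    by blast
  have "\<gamma>^2 * (v \<bullet> b)^2 \<le> 4 * (((D' - D) *v v) \<bullet> b)^2" if "b \<in> B" for b
  proof -
    define \<nu> where "\<nu> = b \<bullet> (D' *v b)"
    have b: "D' *v b = \<nu> *\<^sub>R b" "b \<noteq> 0" "transpose W *v b = 0"
      using B(1,5) that by (auto simp: \<nu>_def)
    have "\<gamma> \<le> 2 * \<bar>\<nu> - \<mu>\<bar>" using small[OF b(2,1,3)] gap by (smt (verit))
    then have "\<gamma> * \<bar>v \<bullet> b\<bar> \<le> 2 * \<bar>((D' - D) *v v) \<bullet> b\<bar>"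
      using eigenvector_inner_perturbation[OF sym' eig b(1)] mult_right_mono[of \<gamma> "2 * \<bar>\<nu> - \<mu>\<bar>" "\<bar>v \<bullet> b\<bar>"]
      by (simp add: abs_mult)
    from square_le_four_times_square[OF _ this] \<open>0 \<le> \<gamma>\<close> show ?thesis
      by (simp add: power_mult_distrib)
  qed
  moreover have "r \<bullet> b = v \<bullet> b" if "b \<in> B" for b
  proof -
    have "(W *v (transpose W *v v)) \<bullet> b = 0"
      using B(1) that by (auto simp: matrix_vector_inner_transpose)
    then show ?thesis by (simp add: r_def inner_diff_left)
  qed
  moreover have "r \<in> span B" using B(4) transpose_isometry_residual[OF W] by (auto simp: r_def)
  then have "r \<bullet> r = (\<Sum>b\<in>B. (r \<bullet> b)^2)" using B(2,3,5) by (intro parseval_identity) auto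
  ultimately have "\<gamma>^2 * (r \<bullet> r) \<le> 4 * (\<Sum>b\<in>B. (((D' - D) *v v) \<bullet> b)^2)"
    by (simp add: sum_distrib_left sum_mono)
  also have "\<dots> \<le> 4 * (((D' - D) *v v) \<bullet> ((D' - D) *v v))"
    using bessel_inequality[OF B(2,3)] B(5) by simp
  finally show ?thesis by (simp add: r_def dot_square_norm)
qed

lemma sin_theta_bound_large_eigenvalues:
  fixes D D' :: "real^'t^'t" and V :: "real^'j^'t" and W :: "real^'k^'t"
  assumes sym: "transpose D = D" and V: "transpose V ** V = mat 1"
    and kernel: "\<And>x. transpose V *v x = 0 \<Longrightarrow> D *v x = 0"
    and W: "transpose W ** W = mat 1" and eig': "\<And>l. D' *v column l W = \<mu>' l *\<^sub>R column l W"
    and gap: "\<And>l. \<gamma> \<le> 2 * \<bar>\<mu>' l\<bar>" and "0 \<le> \<gamma>"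
  shows "\<gamma>^2 * (real CARD('k) - norm (transpose V ** W)^2) \<le> 4 * norm (D' - D)^2"
proof -
  let ?q = "\<lambda>l. column l W - V *v (transpose V *v column l W)"
  have "\<gamma>^2 * norm (?q l)^2 \<le> 4 * norm ((D' - D) *v column l W)^2" for l
  proof (rule square_le_four_times_square[of "\<gamma> * norm (?q l)", unfolded power_mult_distrib])
    have "\<gamma> * norm (?q l) \<le> 2 * \<bar>\<mu>' l\<bar> * norm (?q l)"
      using gap[of l] by (simp add: mult_right_mono)
    also have "\<dots> \<le> 2 * norm ((D' - D) *v column l W)"
      using residual_large_eigenvalue_bound[OF sym V kernel eig'] by simp
    finally show "\<gamma> * norm (?q l) \<le> 2 * norm ((D' - D) *v column l W)" .
  qed (use \<open>0 \<le> \<gamma>\<close> in simp)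
  then have "\<gamma>^2 * (real CARD('k) - norm (transpose V ** W)^2) \<le> (\<Sum>l\<in>UNIV. 4 * norm ((D' - D) *v column l W)^2)"
    unfolding card_minus_norm_transpose_mult_sq[OF V W] sum_distrib_left by (rule sum_mono)
  also have "\<dots> = 4 * norm ((D' - D) ** W)^2"
    by (simp add: norm_matrix_sq_columns column_matrix_mult sum_distrib_left)
  also have "\<dots> \<le> 4 * norm (D' - D)^2"
    using norm_mult_isometry_le[OF W, of "D' - D"] by (simp add: power_mono)
  finally show ?thesis .
qed

lemma sin_theta_bound_small_eigenvalues:
  fixes D D' :: "real^'t^'t" and V :: "real^'j^'t" and W :: "real^'k^'t"
  assumes sym': "transpose D' = D'" and W: "transpose W ** W = mat 1"
    and eig': "\<And>l. D' *v column l W = \<mu>' l *\<^sub>R column l W"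
    and small: "\<And>x \<nu>. x \<noteq> 0 \<Longrightarrow> D' *v x = \<nu> *\<^sub>R x \<Longrightarrow> transpose W *v x = 0 \<Longrightarrow> 2 * \<bar>\<nu>\<bar> \<le> \<gamma>"
    and V: "transpose V ** V = mat 1" and eig: "\<And>k. D *v column k V = \<mu> k *\<^sub>R column k V"
    and gap: "\<And>k. \<gamma> \<le> \<bar>\<mu> k\<bar>" and "0 \<le> \<gamma>"
  shows "\<gamma>^2 * (real CARD('j) - norm (transpose W ** V)^2) \<le> 4 * norm (D' - D)^2"
proof -
  have "\<gamma>^2 * norm (column k V - W *v (transpose W *v column k V))^2
      \<le> 4 * norm ((D' - D) *v column k V)^2" for k
    using sym' W eig' small eig gap \<open>0 \<le> \<gamma>\<close> by (rule residual_small_eigenvalues_bound)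
  then have "\<gamma>^2 * (real CARD('j) - norm (transpose W ** V)^2) \<le> (\<Sum>k\<in>UNIV. 4 * norm ((D' - D) *v column k V)^2)"
    unfolding card_minus_norm_transpose_mult_sq[OF W V] sum_distrib_left by (rule sum_mono)
  also have "\<dots> = 4 * norm ((D' - D) ** V)^2"
    by (simp add: norm_matrix_sq_columns column_matrix_mult sum_distrib_left)
  also have "\<dots> \<le> 4 * norm (D' - D)^2"
    using norm_mult_isometry_le[OF V, of "D' - D"] by (simp add: power_mono)
  finally show ?thesis .
qed

text \<open>Either all top eigenvalues of \<open>D'\<close> stay above \<open>\<gamma>/2\<close> in absolute value, and then the
  columns of \<open>V'\<close> lie almost in the column space of \<open>V\<close>; or one of them falls below, and then the
  remaining spectrum of \<open>D'\<close> is separated by \<open>\<gamma>/2\<close> from the spectrum of \<open>D\<close> on the columns of \<open>V\<close>.\<close>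
theorem top_abs_eigvecs_sin_theta_bound:
  fixes D D' :: "real^'t^'t" and V V' :: "real^'k^'t"
  assumes sym: "transpose D = D" and sym': "transpose D' = D'" and rank: "rank D = CARD('k)"
    and top: "top_abs_eigvecs D V" and top': "top_abs_eigvecs D' V'"
  shows "(min_nonzero_abs_eig D)^2 * (real CARD('k) - norm (transpose V' ** V)^2) \<le> 4 * norm (D' - D)^2"
proof -
  define \<gamma> where "\<gamma> = min_nonzero_abs_eig D"
  obtain \<mu> where eig: "\<And>k. D *v column k V = \<mu> k *\<^sub>R column k V" and nz: "\<And>k. \<mu> k \<noteq> 0"
    and kernel: "\<And>x. transpose V *v x = 0 \<Longrightarrow> D *v x = 0"
    using top_abs_eigvecs_full_rank[OF sym rank top] by blast
  have V: "transpose V ** V = mat 1" using top by (simp add: top_abs_eigvecs_def)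
  have "column k V \<noteq> 0" for k using isometry_columns_inner[OF V, of k k] by auto
  then have \<gamma>: "0 < \<gamma>" "\<gamma> \<le> \<bar>\<mu> k\<bar>" for k
    using min_nonzero_abs_eig_le[OF sym eig _ nz] by (auto simp: \<gamma>_def)
  obtain \<mu>' :: "real^'k" where V': "transpose V' ** V' = mat 1"
    and eig': "\<And>l. D' *v column l V' = \<mu>' $ l *\<^sub>R column l V'"
    and dom': "\<And>x \<nu> l. x \<noteq> 0 \<Longrightarrow> D' *v x = \<nu> *\<^sub>R x \<Longrightarrow> transpose V' *v x = 0 \<Longrightarrow> \<bar>\<nu>\<bar> \<le> \<bar>\<mu>' $ l\<bar>"
    using top' unfolding top_abs_eigvecs_def transpose_matrix_vector_eq_0_iff by metis
  show ?thesis
  proof (cases "\<forall>l. \<gamma> \<le> 2 * \<bar>\<mu>' $ l\<bar>")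
    case True
    have "norm (transpose V' ** V) = norm (transpose V ** V')"
      by (metis norm_transpose matrix_transpose_mul transpose_transpose)
    then show ?thesis
      using sin_theta_bound_large_eigenvalues[OF sym V kernel V' eig'] True \<gamma>(1)
      by (simp add: \<gamma>_def)
  next
    case False
    then obtain l where "2 * \<bar>\<mu>' $ l\<bar> < \<gamma>" by (auto simp: not_le)
    then have "2 * \<bar>\<nu>\<bar> \<le> \<gamma>"
      if "x \<noteq> 0" "D' *v x = \<nu> *\<^sub>R x" "transpose V' *v x = 0" for x \<nu>
      using dom'[OF that, of l] by linarith
    from sin_theta_bound_small_eigenvalues[OF sym' V' eig' this V eig] show ?thesis
      using \<gamma> by (simp add: \<gamma>_def)
  qed
qed

section \<open>Distance matrices\<close>

lemma dist_matrix_symmetric: "transpose (dist_matrix P) = dist_matrix P"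
  by (simp add: dist_matrix_def transpose_def vec_eq_iff frob_norm_eq_norm norm_minus_commute)

lemma norm_dist_matrix_diff_sq_le:
  fixes P P' :: "'t::finite \<Rightarrow> real^'n^'n"
  shows "norm (dist_matrix P' - dist_matrix P)^2 \<le> 4 * real CARD('t) * (\<Sum>i\<in>UNIV. norm (P' i - P i)^2)"
proof -
  define a where "a i = norm (P' i - P i)" for i
  have "((dist_matrix P' - dist_matrix P) $ i $ j)^2 \<le> 2 * (a i)^2 + 2 * (a j)^2" for i j
  proof -
    have "\<bar>norm (P' i - P' j) - norm (P i - P j)\<bar> \<le> norm ((P' i - P' j) - (P i - P j))"
      by (rule norm_triangle_ineq3)
    also have "\<dots> = norm ((P' i - P i) - (P' j - P j))" by (simp add: algebra_simps)
    also have "\<dots> \<le> a i + a j" unfolding a_def by (rule norm_triangle_ineq4)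
    finally have "\<bar>(dist_matrix P' - dist_matrix P) $ i $ j\<bar> \<le> a i + a j"
      by (simp add: dist_matrix_def frob_norm_eq_norm)
    from power_mono[OF this abs_ge_zero, of 2]
    have "((dist_matrix P' - dist_matrix P) $ i $ j)^2 \<le> (a i + a j)^2" by simp
    also have "\<dots> \<le> 2 * (a i)^2 + 2 * (a j)^2"
      using zero_le_power2[of "a i - a j"] unfolding power2_diff power2_sum by linarith
    finally show ?thesis .
  qed
  then have "norm (dist_matrix P' - dist_matrix P)^2 \<le> (\<Sum>i\<in>UNIV. \<Sum>j\<in>UNIV. 2 * (a i)^2 + 2 * (a j)^2)"
    unfolding norm_matrix_sq_entries by (intro sum_mono)
  also have "\<dots> = 4 * real CARD('t) * (\<Sum>i\<in>UNIV. (a i)^2)"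
    by (simp add: sum.distrib sum_distrib_left[symmetric] algebra_simps)
  finally show ?thesis by (simp add: a_def)
qed

lemma min_nonzero_abs_eig_pos:
  fixes D :: "real^'t^'t" and V :: "real^'k^'t"
  assumes "transpose D = D" "rank D = CARD('k)" "top_abs_eigvecs D V"
  shows "0 < min_nonzero_abs_eig D"
proof -
  obtain \<mu> where eig: "\<And>k. D *v column k V = \<mu> k *\<^sub>R column k V" and nz: "\<And>k. \<mu> k \<noteq> 0"
    using top_abs_eigvecs_full_rank[OF assms] by metis
  fix k :: 'k
  have "transpose V ** V = mat 1" using assms(3) by (simp add: top_abs_eigvecs_def)
  then have "column k V \<noteq> 0" using isometry_columns_inner[of V k k] by auto
  then show ?thesis by (rule min_nonzero_abs_eig_le(1)[OF assms(1) eig _ nz])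
qed

theorem dist_matrix_top_abs_eigvecs_perturbation:
  fixes P P' :: "'t::finite \<Rightarrow> real^'n^'n" and V V' :: "real^'k^'t"
  assumes rank: "rank (dist_matrix P) = CARD('k)"
    and top: "top_abs_eigvecs (dist_matrix P) V" and top': "top_abs_eigvecs (dist_matrix P') V'"
  obtains Q where "orthogonal_matrix Q" "norm (V' ** Q - V)^2
    \<le> 32 * real CARD('t) * (\<Sum>i\<in>UNIV. norm (P' i - P i)^2) / (min_nonzero_abs_eig (dist_matrix P))^2"
proof -
  define \<gamma> where "\<gamma> = min_nonzero_abs_eig (dist_matrix P)"
  have \<gamma>: "0 < \<gamma>" unfolding \<gamma>_def using dist_matrix_symmetric rank top by (rule min_nonzero_abs_eig_pos)
  have "transpose V' ** V' = mat 1" "transpose V ** V = mat 1"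
    using top top' by (simp_all add: top_abs_eigvecs_def)
  then obtain Q where Q: "orthogonal_matrix Q"
      "norm (V' ** Q - V)^2 \<le> 2 * (real CARD('k) - norm (transpose V' ** V)^2)"
    by (rule procrustes_bound)
  have "\<gamma>^2 * norm (V' ** Q - V)^2 \<le> 2 * (\<gamma>^2 * (real CARD('k) - norm (transpose V' ** V)^2))"
    using mult_left_mono[OF Q(2), of "\<gamma>^2"] by (simp add: algebra_simps)
  also have "\<dots> \<le> 8 * norm (dist_matrix P' - dist_matrix P)^2"
    using top_abs_eigvecs_sin_theta_bound[OF dist_matrix_symmetric dist_matrix_symmetric rank top top']
    by (simp add: \<gamma>_def)
  also have "\<dots> \<le> 32 * real CARD('t) * (\<Sum>i\<in>UNIV. norm (P' i - P i)^2)"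
    using norm_dist_matrix_diff_sq_le[of P' P] by simp
  finally have "\<gamma>^2 * norm (V' ** Q - V)^2 \<le> 32 * real CARD('t) * (\<Sum>i\<in>UNIV. norm (P' i - P i)^2)" .
  then show thesis using Q(1) \<gamma> by (intro that) (simp_all add: \<gamma>_def pos_le_divide_eq mult.commute)
qed

section \<open>Estimated networks\<close>

lemma scaled_bound_le_Max:
  fixes C :: "'i::finite \<Rightarrow> real"
  assumes "r / s \<le> C i * x" "0 < s" "0 \<le> x"
  shows "r \<le> s * (Max (range C) * x)"
proof -
  have "r \<le> s * (C i * x)" using assms(1,2) by (simp add: pos_divide_le_eq mult.commute)
  also have "\<dots> \<le> s * (Max (range C) * x)"
    using assms(2,3) by (intro mult_left_mono mult_right_mono Max_ge) auto
  finally show ?thesis .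
qed

lemma dist_matrix_top_abs_eigvecs_uniform_bound:
  fixes P P' :: "'t::finite \<Rightarrow> real^'n^'n" and V V' :: "real^'k^'t" and C :: "'t \<Rightarrow> real"
  assumes "rank (dist_matrix P) = CARD('k)" "top_abs_eigvecs (dist_matrix P) V"
    "top_abs_eigvecs (dist_matrix P') V'"
    and close: "\<And>i. norm (P' i - P i)^2 / s \<le> C i * x" and "0 < s" "0 \<le> x"
  obtains Q where "orthogonal_matrix Q" "norm (V' ** Q - V)^2
    \<le> 32 * real CARD('t)^2 * (s * (Max (range C) * x)) / (min_nonzero_abs_eig (dist_matrix P))^2"
proof -
  define c where "c = s * (Max (range C) * x)"
  obtain Q where "orthogonal_matrix Q" and Q: "norm (V' ** Q - V)^2
      \<le> 32 * real CARD('t) * (\<Sum>i\<in>UNIV. norm (P' i - P i)^2) / (min_nonzero_abs_eig (dist_matrix P))^2"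
    using dist_matrix_top_abs_eigvecs_perturbation[OF assms(1-3)] by blast
  moreover have "norm (P' i - P i)^2 \<le> c" for i
    using scaled_bound_le_Max[where C = C and i = i, OF close[of i] assms(5,6)] by (simp add: c_def)
  then have "(\<Sum>i\<in>UNIV. norm (P' i - P i)^2) \<le> real CARD('t) * c"
    using sum_mono[of UNIV "\<lambda>i. norm (P' i - P i)^2" "\<lambda>_. c"] by simp
  then have "32 * real CARD('t) * (\<Sum>i\<in>UNIV. norm (P' i - P i)^2) / (min_nonzero_abs_eig (dist_matrix P))^2
      \<le> 32 * real CARD('t)^2 * c / (min_nonzero_abs_eig (dist_matrix P))^2"
    by (intro divide_right_mono) (simp_all add: power2_eq_square)
  ultimately show thesis by (intro that) (auto simp: c_def)
qed

lemma nn_integral_divide_le_imp: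
  assumes "f \<in> borel_measurable M" "0 < s" "(\<integral>\<^sup>+x. ennreal (f x / s) \<partial>M) \<le> ennreal b"
  shows "(\<integral>\<^sup>+x. ennreal (f x) \<partial>M) \<le> ennreal (s * b)"
proof -
  have "(\<integral>\<^sup>+x. ennreal (f x) \<partial>M) = (\<integral>\<^sup>+x. ennreal s * ennreal (f x / s) \<partial>M)"
    using assms(2) by (simp flip: ennreal_mult')
  also have "\<dots> = ennreal s * (\<integral>\<^sup>+x. ennreal (f x / s) \<partial>M)"
    using assms(1) by (simp add: nn_integral_cmult)
  also have "\<dots> \<le> ennreal (s * b)"
    using assms(2,3) by (simp add: ennreal_mult' mult_left_mono)
  finally show ?thesis .
qed

lemma nn_integral_scaled_bound_le_Max:
  fixes C :: "'i::finite \<Rightarrow> real"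
  assumes "f \<in> borel_measurable M" "(\<integral>\<^sup>+\<omega>. ennreal (f \<omega> / s) \<partial>M) \<le> ennreal (C i * x)"
    and s: "0 < s" and x: "0 \<le> x"
  shows "(\<integral>\<^sup>+\<omega>. ennreal (f \<omega>) \<partial>M) \<le> ennreal (s * (Max (range C) * x))"
proof -
  have "(\<integral>\<^sup>+\<omega>. ennreal (f \<omega>) \<partial>M) \<le> ennreal (s * (C i * x))"
    using assms(1) s assms(2) by (rule nn_integral_divide_le_imp)
  also have "\<dots> \<le> ennreal (s * (Max (range C) * x))"
    using scaled_bound_le_Max[of "s * (C i * x)" s C i x] s x by (intro ennreal_leI) simp
  finally show ?thesis .
qed

lemma nn_integral_dist_matrix_top_abs_eigvecs_bound:
  fixes M :: "'a measure" and P :: "'t::finite \<Rightarrow> real^'n^'n" and Phat :: "'a \<Rightarrow> 't \<Rightarrow> real^'n^'n"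
    and V :: "real^'k^'t" and Vhat :: "'a \<Rightarrow> real^'k^'t" and C :: "'t \<Rightarrow> real"
  assumes rank: "rank (dist_matrix P) = CARD('k)" and top: "top_abs_eigvecs (dist_matrix P) V"
    and top': "\<And>\<omega>. top_abs_eigvecs (dist_matrix (Phat \<omega>)) (Vhat \<omega>)"
    and meas: "\<And>i. (\<lambda>\<omega>. Phat \<omega> i) \<in> borel_measurable M"
    and mean: "\<And>i. (\<integral>\<^sup>+\<omega>. ennreal (norm (Phat \<omega> i - P i)^2 / s) \<partial>M) \<le> ennreal (C i * x)"
    and s: "0 < s" and x: "0 \<le> x"
  obtains Ohat where "\<And>\<omega>. orthogonal_matrix (Ohat \<omega>)" "(\<integral>\<^sup>+\<omega>. ennreal (norm (Vhat \<omega> ** Ohat \<omega> - V)^2) \<partial>M)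
    \<le> ennreal (32 * real CARD('t)^2 * (s * (Max (range C) * x)) / (min_nonzero_abs_eig (dist_matrix P))^2)"
proof -
  define \<kappa> where "\<kappa> = 32 * real CARD('t) / (min_nonzero_abs_eig (dist_matrix P))^2"
  define c where "c = s * (Max (range C) * x)"
  have \<kappa>: "0 \<le> \<kappa>" by (simp add: \<kappa>_def)
  have "\<forall>\<omega>. \<exists>Q. orthogonal_matrix Q \<and>
      norm (Vhat \<omega> ** Q - V)^2 \<le> \<kappa> * (\<Sum>i\<in>UNIV. norm (Phat \<omega> i - P i)^2)"
  proof
    fix \<omega>
    obtain Q where "orthogonal_matrix Q" "norm (Vhat \<omega> ** Q - V)^2 \<le> 32 * real CARD('t)
        * (\<Sum>i\<in>UNIV. norm (Phat \<omega> i - P i)^2) / (min_nonzero_abs_eig (dist_matrix P))^2"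
      by (rule dist_matrix_top_abs_eigvecs_perturbation[OF rank top top'])
    then show "\<exists>Q. orthogonal_matrix Q \<and>
        norm (Vhat \<omega> ** Q - V)^2 \<le> \<kappa> * (\<Sum>i\<in>UNIV. norm (Phat \<omega> i - P i)^2)"
      by (auto simp: \<kappa>_def)
  qed
  then obtain Ohat where "\<forall>\<omega>. orthogonal_matrix (Ohat \<omega>) \<and>
      norm (Vhat \<omega> ** Ohat \<omega> - V)^2 \<le> \<kappa> * (\<Sum>i\<in>UNIV. norm (Phat \<omega> i - P i)^2)"
    by (auto dest: choice)
  then have Ohat: "\<And>\<omega>. orthogonal_matrix (Ohat \<omega>)"
    and bound: "\<And>\<omega>. norm (Vhat \<omega> ** Ohat \<omega> - V)^2 \<le> \<kappa> * (\<Sum>i\<in>UNIV. norm (Phat \<omega> i - P i)^2)"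
    by auto
  have [measurable]: "(\<lambda>\<omega>. Phat \<omega> i) \<in> borel_measurable M" for i by (rule meas)
  have mean': "(\<integral>\<^sup>+\<omega>. ennreal (norm (Phat \<omega> i - P i)^2) \<partial>M) \<le> ennreal c" for i
    unfolding c_def by (rule nn_integral_scaled_bound_le_Max[OF _ mean s x]) measurable
  have "(\<integral>\<^sup>+\<omega>. ennreal (norm (Vhat \<omega> ** Ohat \<omega> - V)^2) \<partial>M)
      \<le> (\<integral>\<^sup>+\<omega>. (\<Sum>i\<in>UNIV. ennreal \<kappa> * ennreal (norm (Phat \<omega> i - P i)^2)) \<partial>M)"
    using bound \<kappa> by (intro nn_integral_mono)
      (simp add: ennreal_leI sum_distrib_left flip: ennreal_mult)
  also have "\<dots> = (\<Sum>i\<in>UNIV. ennreal \<kappa> * (\<integral>\<^sup>+\<omega>. ennreal (norm (Phat \<omega> i - P i)^2) \<partial>M))"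
    by (simp add: nn_integral_sum nn_integral_cmult)
  also have "\<dots> \<le> (\<Sum>i\<in>(UNIV::'t set). ennreal \<kappa> * ennreal c)"
    by (intro sum_mono mult_left_mono mean') simp
  also have "\<dots> = ennreal (real CARD('t) * (\<kappa> * c))"
    using \<kappa> by (simp add: ennreal_of_nat_eq_real_of_nat ennreal_mult')
  also have "real CARD('t) * (\<kappa> * c) = 32 * real CARD('t)^2 * c / (min_nonzero_abs_eig (dist_matrix P))^2"
    by (simp add: \<kappa>_def power2_eq_square)
  finally show thesis using Ohat by (intro that[of Ohat]) (simp_all add: c_def)
qed

lemma (in prob_space) union_bound_events:
  fixes Q :: "'i::finite \<Rightarrow> 'a \<Rightarrow> bool"
  assumes "\<forall>i. \<exists>A\<in>events. 1 - \<epsilon> i \<le> prob A \<and> (\<forall>\<omega>\<in>A. Q i \<omega>)"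
  obtains A where "A \<in> events" "1 - (\<Sum>i\<in>UNIV. \<epsilon> i) \<le> prob A" "\<And>\<omega> i. \<omega> \<in> A \<Longrightarrow> Q i \<omega>"
proof -
  obtain B where B: "\<And>i. B i \<in> events" "\<And>i. 1 - \<epsilon> i \<le> prob (B i)" "\<And>i \<omega>. \<omega> \<in> B i \<Longrightarrow> Q i \<omega>"
    using assms by metis
  have "prob (space M - (\<Inter>i. B i)) = prob (\<Union>i. space M - B i)" by (rule arg_cong[where f = prob]) auto
  also have "\<dots> \<le> (\<Sum>i\<in>UNIV. prob (space M - B i))"
    using B(1) by (intro finite_measure_subadditive_finite) auto
  also have "\<dots> \<le> (\<Sum>i\<in>UNIV. \<epsilon> i)"
    using B by (intro sum_mono) (simp add: prob_compl algebra_simps)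
  finally show thesis using B by (intro that[of "\<Inter>i. B i"]) (auto simp: prob_compl sets.finite_INT)
qed

theorem corollary1:
  fixes M :: "'a measure"
    and P :: "'t::finite \<Rightarrow> real^'n::finite^'n"
    and Phat :: "'a \<Rightarrow> 't \<Rightarrow> real^'n^'n"
    and V :: "real^'k::finite^'t"
    and C :: "'t \<Rightarrow> real"
    and \<epsilon> :: "'t \<Rightarrow> real"
    and \<alpha> \<beta> :: real
  assumes "prob_space M"
    and "\<alpha> > 0" and "\<beta> > 0"
    and "rank (dist_matrix P) = CARD('k)"
    and "top_abs_eigvecs (dist_matrix P) V"
  defines "n \<equiv> real CARD('n)"
    and "T \<equiv> real CARD('t)"
    and "CT \<equiv> Max (range C)"
    and "\<gamma> \<equiv> min_nonzero_abs_eig (dist_matrix P)"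
  defines "bound \<equiv> 64 * CT * T^2 * n powr (2 - \<alpha>) * ln n powr \<beta> / \<gamma>^2"
  shows
    \<comment> \<open>in-expectation version\<close>
    "((\<forall>i. (\<lambda>\<omega>. Phat \<omega> i) \<in> borel_measurable M) \<and>
      (\<forall>i. (\<integral>\<^sup>+\<omega>. ennreal ((frob_norm (Phat \<omega> i - P i))^2 / n^2) \<partial>M)
              \<le> ennreal (C i * n powr (-\<alpha>) * ln n powr \<beta>))
      \<longrightarrow> (\<forall>Vhat :: 'a \<Rightarrow> real^'k^'t.
             (\<forall>\<omega>. top_abs_eigvecs (dist_matrix (Phat \<omega>)) (Vhat \<omega>)) \<longrightarrow>
             (\<exists>Ohat :: 'a \<Rightarrow> real^'k^'k. (\<forall>\<omega>. orthogonal_matrix (Ohat \<omega>)) \<and>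
                (\<integral>\<^sup>+\<omega>. ennreal ((frob_norm (Vhat \<omega> ** Ohat \<omega> - V))^2) \<partial>M)
                   \<le> ennreal bound)))
     \<and>
     \<comment> \<open>high-probability version\<close>
     ((\<forall>i. \<exists>A\<in>sets M. measure M A \<ge> 1 - \<epsilon> i \<and>
             (\<forall>\<omega>\<in>A. (frob_norm (Phat \<omega> i - P i))^2 / n^2
                        \<le> C i * n powr (-\<alpha>) * ln n powr \<beta>))
      \<longrightarrow> (\<exists>A\<in>sets M. measure M A \<ge> 1 - (\<Sum>i\<in>UNIV. \<epsilon> i) \<and>
             (\<forall>\<omega>\<in>A. \<forall>Vhat :: real^'k^'t.
                top_abs_eigvecs (dist_matrix (Phat \<omega>)) Vhat \<longrightarrow>
                (\<exists>Ohat :: real^'k^'k. orthogonal_matrix Ohat \<and>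
                   (frob_norm (Vhat ** Ohat - V))^2 \<le> bound))))"
proof -
  interpret prob_space M by fact
  define x where "x = n powr (- \<alpha>) * ln n powr \<beta>"
  define w where "w = 32 * T^2 * (n^2 * (CT * x)) / \<gamma>^2"
  have n: "0 < n" and x: "0 \<le> x" by (simp_all add: n_def x_def)
  have bound: "bound = 2 * w"
    using n by (simp add: bound_def w_def x_def powr_diff powr_minus divide_simps)
  have hyp: "C i * n powr (- \<alpha>) * ln n powr \<beta> = C i * x" for i by (simp add: x_def)
  show ?thesis unfolding frob_norm_eq_norm hyp
  proof (intro conjI impI allI, goal_cases)
    case (1 Vhat)
    then obtain Ohat where "\<And>\<omega>. orthogonal_matrix (Ohat \<omega>)"
      "(\<integral>\<^sup>+\<omega>. ennreal (norm (Vhat \<omega> ** Ohat \<omega> - V)^2) \<partial>M) \<le> ennreal w"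
      using nn_integral_dist_matrix_top_abs_eigvecs_bound[where Phat = Phat and Vhat = Vhat and M = M and C = C,
          OF assms(4,5) _ _ _ zero_less_power[OF n] x]
      unfolding w_def T_def CT_def \<gamma>_def by blast
    moreover have "ennreal w \<le> ennreal bound" by (cases "0 \<le> w") (simp_all add: bound ennreal_neg)
    ultimately show ?case by (blast intro: order_trans)
  next
    case 2
    then obtain A where A: "A \<in> events" "1 - (\<Sum>i\<in>UNIV. \<epsilon> i) \<le> prob A"
      "\<And>\<omega> i. \<omega> \<in> A \<Longrightarrow> norm (Phat \<omega> i - P i)^2 / n^2 \<le> C i * x"
      by (rule union_bound_events) blast
    have "\<exists>Q. orthogonal_matrix Q \<and> norm (Vhat ** Q - V)^2 \<le> bound"
      if \<omega>: "\<omega> \<in> A" and top': "top_abs_eigvecs (dist_matrix (Phat \<omega>)) Vhat" for \<omega> Vhat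
    proof -
      obtain Q where "orthogonal_matrix Q" "norm (Vhat ** Q - V)^2 \<le> w"
        using dist_matrix_top_abs_eigvecs_uniform_bound[OF assms(4,5) top' A(3)[OF \<omega>] zero_less_power[OF n] x]
        unfolding w_def T_def CT_def \<gamma>_def by blast
      moreover have "0 \<le> w" using calculation(2) by (meson order_trans zero_le_power2)
      ultimately show ?thesis by (intro exI[of _ Q]) (simp add: bound)
    qed
    then show ?case using A(1,2) by blast
  qed
qed

end
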